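(* For every caterpillar $T$, \[U_T(x_1=0,x_2,x_3,\ldots)=U^L_T(x_1=0,x_2,x_3,\ldots).\] Furthermore, if $T$ is proper, then $U^L_T(\mathbf{x})$ does not depend on $x_1$; in particular, in that case $U^L_T$ is an evaluation of the $U$-polynomial of $T$ (namely $U^L_T(\mathbf{x})=U_T(0,x_2,x_3,\ldots)$).
   Context: Let $\mathbf{x}=x_1,x_2,\ldots$ be commuting indeterminates; for a partition $\lambda=\lambda_1\lambda_2\cdots\lambda_l$ put $\mathbf{x}_\lambda=x_{\lambda_1}\cdots x_{\lambda_l}$. For a tree $T=(V,E)$ and $A\subseteq E$, let $T|_A$ be the spanning subgraph $(V,A)$ and $\lambda(A)$ the partition of $|V|$ formed by the sizes of the connected components of $T|_A$. The $U$-polynomial of the tree $T$ is $U_T(\mathbf{x})=\sum_{A\subseteq E}\mathbf{x}_{\lambda(A)}$. A caterpillar is a tree in which the subgraph induced by the internal (non-leaf) vertices is a non-trivial path, the spine; $P(T)$ denotes the set of spine edges and $L(T)=E\setminus P(T)$ the set of leaf-edges. A caterpillar is proper if every internal vertex is adjacent to at least one leaf. The restricted weighted polynomial is $U^L_T(\mathbf{x})=\sum_{A\subseteq E,\ L(T)\subseteq A}\mathbf{x}_{\lambda(A)}$. *)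

theory Defs
  imports Main
begin

text \<open>Graphs: finite vertex set V, edges are 2-element subsets of V.\<close>

definition edge_rel :: "'a set set \<Rightarrow> ('a \<times> 'a) set" where
  "edge_rel A = {(u, v). {u, v} \<in> A \<and> u \<noteq> v}"

definition components :: "'a set \<Rightarrow> 'a set set \<Rightarrow> 'a set set" where
  "components V A = V // ((edge_rel A)\<^sup>*)"

definition xmon :: "(nat \<Rightarrow> 'r::comm_ring_1) \<Rightarrow> 'a set \<Rightarrow> 'a set set \<Rightarrow> 'r" where
  "xmon x V A = (\<Prod>C\<in>components V A. x (card C))"

definition is_tree :: "'a set \<Rightarrow> 'a set set \<Rightarrow> bool" where
  "is_tree V E \<longleftrightarrow> finite V \<and> V \<noteq> {} \<and>
     E \<subseteq> {{u, v} | u v. u \<in> V \<and> v \<in> V \<and> u \<noteq> v} \<and>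
     components V E = {V} \<and> card E + 1 = card V"

definition degree :: "'a set set \<Rightarrow> 'a \<Rightarrow> nat" where
  "degree E v = card {e \<in> E. v \<in> e}"

definition internal_vertices :: "'a set \<Rightarrow> 'a set set \<Rightarrow> 'a set" where
  "internal_vertices V E = {v \<in> V. 2 \<le> degree E v}"

definition spine_edges :: "'a set \<Rightarrow> 'a set set \<Rightarrow> 'a set set" where
  "spine_edges V E = {e \<in> E. e \<subseteq> internal_vertices V E}"

definition leaf_edges :: "'a set \<Rightarrow> 'a set set \<Rightarrow> 'a set set" where
  "leaf_edges V E = E - spine_edges V E"

definition is_caterpillar :: "'a set \<Rightarrow> 'a set set \<Rightarrow> bool" where
  "is_caterpillar V E \<longleftrightarrow> is_tree V E \<and>
     (\<exists>vs. distinct vs \<and> 2 \<le> length vs \<and> set vs = internal_vertices V E \<and>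
        spine_edges V E = {{vs ! i, vs ! Suc i} | i. Suc i < length vs})"

definition proper_caterpillar :: "'a set \<Rightarrow> 'a set set \<Rightarrow> bool" where
  "proper_caterpillar V E \<longleftrightarrow> is_caterpillar V E \<and>
     (\<forall>v \<in> internal_vertices V E. \<exists>u. {u, v} \<in> E \<and> degree E u = 1)"

definition U_poly :: "'a set \<Rightarrow> 'a set set \<Rightarrow> (nat \<Rightarrow> 'r::comm_ring_1) \<Rightarrow> 'r" where
  "U_poly V E x = (\<Sum>A\<in>Pow E. xmon x V A)"

definition UL_poly :: "'a set \<Rightarrow> 'a set set \<Rightarrow> (nat \<Rightarrow> 'r::comm_ring_1) \<Rightarrow> 'r" where
  "UL_poly V E x = (\<Sum>A\<in>{A. A \<subseteq> E \<and> leaf_edges V E \<subseteq> A}. xmon x V A)"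

end

theory Submission
  imports Defs
begin

text \<open>A subset A of edges missing some leaf edge leaves the leaf end of that edge isolated,
  i.e. a singleton component, so its monomial contains the factor x_1; hence at x_1 = 0
  only the sets containing all leaf edges contribute. In a proper caterpillar every vertex lies
  on a leaf edge, so for such sets no component is a singleton and x_1 never occurs.\<close>

lemma finite_components: "finite V \<Longrightarrow> finite (components V A)"
  unfolding components_def quotient_def by auto

lemma singleton_in_components_if_isolated:
  assumes "w \<in> V" and "\<forall>e\<in>A. w \<notin> e"
  shows "{w} \<in> components V A"
proof -
  have "z = w" if "(w, z) \<in> (edge_rel A)\<^sup>*" for z
    using that by (cases rule: converse_rtranclE) (use assms(2) in \<open>auto simp: edge_rel_def\<close>)
  then have "(edge_rel A)\<^sup>* `` {w} = {w}" by auto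
  then show ?thesis
    unfolding components_def using quotientI[OF \<open>w \<in> V\<close>] by metis
qed

lemma xmon_eq_0_if_isolated:
  fixes x :: "nat \<Rightarrow> 'r::comm_ring_1"
  assumes "finite V" and "x 1 = 0" and "w \<in> V" and "\<forall>e\<in>A. w \<notin> e"
  shows "xmon x V A = 0"
  unfolding xmon_def
  using singleton_in_components_if_isolated[OF assms(3,4)] finite_components[OF assms(1)] assms(2)
  by (intro prod_zero) (auto intro!: bexI[where x = "{w}"])

lemma unique_edge_if_degree_lt_2:
  assumes "finite E" and "degree E w < 2" and "e \<in> E" "w \<in> e" and "e' \<in> E" "w \<in> e'"
  shows "e' = e"
proof (rule ccontr)
  assume "e' \<noteq> e"
  have "card {e, e'} \<le> degree E w"
    unfolding degree_def using assms by (intro card_mono) auto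
  with \<open>e' \<noteq> e\<close> assms(2) show False by simp
qed

lemma U_poly_eq_UL_poly_if_x1_eq_0:
  fixes x :: "nat \<Rightarrow> 'r::comm_ring_1"
  assumes "finite V" and "E \<subseteq> Pow V" and "x 1 = 0"
  shows "U_poly V E x = UL_poly V E x"
proof -
  have "finite E" using assms(1,2) finite_subset by blast
  have "xmon x V A = 0" if "A \<subseteq> E" and "e \<in> leaf_edges V E" and "e \<notin> A" for A e
  proof -
    have "e \<in> E" and "\<not> e \<subseteq> internal_vertices V E"
      using that(2) unfolding leaf_edges_def spine_edges_def by auto
    then obtain w where "w \<in> e" and "w \<notin> internal_vertices V E" by auto
    moreover have "w \<in> V" using \<open>e \<in> E\<close> \<open>w \<in> e\<close> assms(2) by auto
    ultimately have "degree E w < 2" unfolding internal_vertices_def by auto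
    then have "\<forall>e'\<in>A. w \<notin> e'"
      using unique_edge_if_degree_lt_2[OF \<open>finite E\<close> _ \<open>e \<in> E\<close> \<open>w \<in> e\<close>] that(1,3) by blast
    with \<open>w \<in> V\<close> show ?thesis using assms(1,3) by (intro xmon_eq_0_if_isolated)
  qed
  then show ?thesis
    unfolding U_poly_def UL_poly_def
    by (intro sum.mono_neutral_right) (use \<open>finite E\<close> in auto)
qed

lemma card_components_ne_1_if_covered:
  assumes "\<forall>e\<in>A. card e = 2" and "\<forall>v\<in>V. \<exists>e\<in>A. v \<in> e" and "C \<in> components V A"
  shows "card C \<noteq> 1"
proof -
  obtain v where "v \<in> V" and C: "C = (edge_rel A)\<^sup>* `` {v}"
    using assms(3) unfolding components_def by (auto elim: quotientE)
  then obtain e where "e \<in> A" "v \<in> e" using assms(2) by auto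
  then obtain z where "e = {v, z}" "z \<noteq> v"
    using assms(1) by (fastforce simp: card_2_iff)
  then have "{v, z} \<subseteq> C"
    using \<open>e \<in> A\<close> C unfolding edge_rel_def by auto
  with \<open>z \<noteq> v\<close> show ?thesis by (auto simp: card_1_singleton_iff)
qed

lemma xmon_cong_off_1:
  assumes "\<forall>C\<in>components V A. card C \<noteq> 1" and "\<forall>i. i \<noteq> 1 \<longrightarrow> y i = x i"
  shows "xmon y V A = xmon x V A"
  unfolding xmon_def using assms by (intro prod.cong) auto

lemma tree_vertex_in_edge:
  assumes "is_tree V E" and "v \<in> V" "w \<in> V" "v \<noteq> w"
  shows "\<exists>e\<in>E. v \<in> e"
proof -
  have "(edge_rel E)\<^sup>* `` {v} \<in> components V E"
    unfolding components_def by (rule quotientI[OF \<open>v \<in> V\<close>])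
  then have "(edge_rel E)\<^sup>* `` {v} = V" using assms(1) unfolding is_tree_def by auto
  then have "(v, w) \<in> (edge_rel E)\<^sup>*" using \<open>w \<in> V\<close> by auto
  then obtain z where "(v, z) \<in> edge_rel E"
    using \<open>v \<noteq> w\<close> by (cases rule: converse_rtranclE) auto
  then show ?thesis unfolding edge_rel_def by auto
qed

lemma proper_caterpillar_vertex_in_leaf_edge:
  assumes "proper_caterpillar V E" and "v \<in> V"
  shows "\<exists>e\<in>leaf_edges V E. v \<in> e"
proof (cases "v \<in> internal_vertices V E")
  case True
  then obtain u where "{u, v} \<in> E" "degree E u = 1"
    using assms(1) unfolding proper_caterpillar_def by auto
  then have "{u, v} \<in> leaf_edges V E"
    unfolding leaf_edges_def spine_edges_def internal_vertices_def by auto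
  then show ?thesis by auto
next
  case False
  have cat: "is_caterpillar V E" using assms(1) unfolding proper_caterpillar_def by auto
  then obtain vs where "2 \<le> length vs" "set vs = internal_vertices V E"
    unfolding is_caterpillar_def by auto
  then obtain w where "w \<in> internal_vertices V E"
    by (metis length_greater_0_conv less_le_trans nth_mem zero_less_numeral)
  then have "w \<in> V" "v \<noteq> w" using False unfolding internal_vertices_def by auto
  then obtain e where "e \<in> E" "v \<in> e"
    using tree_vertex_in_edge cat assms(2) unfolding is_caterpillar_def by metis
  then have "e \<in> leaf_edges V E"
    using False unfolding leaf_edges_def spine_edges_def by auto
  with \<open>v \<in> e\<close> show ?thesis by auto
qed

lemma UL_poly_cong_off_1:
  assumes "proper_caterpillar V E" and "\<forall>i. i \<noteq> 1 \<longrightarrow> y i = x i"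
  shows "UL_poly V E y = UL_poly V E x"
proof -
  have "is_tree V E" using assms(1) unfolding proper_caterpillar_def is_caterpillar_def by auto
  then have two: "\<forall>e\<in>E. card e = 2" unfolding is_tree_def by (auto simp: card_2_iff)
  have "\<forall>C\<in>components V A. card C \<noteq> 1" if "A \<subseteq> E" and "leaf_edges V E \<subseteq> A" for A
  proof
    fix C assume "C \<in> components V A"
    moreover have "\<forall>v\<in>V. \<exists>e\<in>A. v \<in> e"
      using proper_caterpillar_vertex_in_leaf_edge[OF assms(1)] that(2) by blast
    moreover have "\<forall>e\<in>A. card e = 2" using two that(1) by blast
    ultimately show "card C \<noteq> 1" by (intro card_components_ne_1_if_covered)
  qed
  then show ?thesis
    unfolding UL_poly_def using assms(2) by (intro sum.cong refl xmon_cong_off_1) auto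
qed

theorem proposition2p1:
  fixes V :: "'a set" and E :: "'a set set" and x :: "nat \<Rightarrow> 'r::comm_ring_1"
  assumes "is_caterpillar V E"
  shows "(x 1 = 0 \<longrightarrow> U_poly V E x = UL_poly V E x) \<and>
         (proper_caterpillar V E \<longrightarrow>
            (\<forall>y. (\<forall>i. i \<noteq> 1 \<longrightarrow> y i = x i) \<longrightarrow> UL_poly V E y = UL_poly V E x) \<and>
            UL_poly V E x = U_poly V E (x(1 := 0)))"
proof -
  have "finite V" and "E \<subseteq> Pow V"
    using assms unfolding is_caterpillar_def is_tree_def by auto
  note U_eq_UL = U_poly_eq_UL_poly_if_x1_eq_0[OF this]
  have "UL_poly V E x = U_poly V E (x(1 := 0))" if "proper_caterpillar V E"
  proof -
    have "UL_poly V E x = UL_poly V E (x(1 := 0))"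
      by (rule UL_poly_cong_off_1[OF that, symmetric]) simp
    also have "\<dots> = U_poly V E (x(1 := 0))" by (simp add: U_eq_UL)
    finally show ?thesis .
  qed
  then show ?thesis using U_eq_UL UL_poly_cong_off_1 by blast
qed

end
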